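(* Let $\theta^*\in\mathbb{R}^d$ with $\|\theta^*\|_2=\sqrt{d}$ and $\sigma>0$, and let $(x^L,y^L)$ be drawn from the $(\theta^*,\sigma)$-Gaussian mixture model. Suppose $v\in\mathbb{R}^d$ is a (fixed) unit vector such that $\big\|v-\frac{\theta^*}{\sqrt{d}}\big\|_2\le\tau$ for some constant $\tau<\sqrt{2}$. Then with probability at least $1-\exp\!\Big(-\frac{d(1-\frac{\tau^2}{2})^2}{2\sigma^2}\Big)$, we have $\mathrm{sign}(y^L\cdot v^\top x^L)\,v^\top\theta^*>0$.
   Context: The $(\theta^*,\sigma)$-Gaussian mixture model is the distribution on $\mathbb{R}^d\times\{\pm1\}$ obtained by drawing $y\in\{\pm1\}$ uniformly at random and then $x\sim\mathcal{N}(y\theta^*,\sigma^2 I_d)$. *)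

theory Defs
  imports "HOL-Probability.Probability"
begin

definition gauss_density :: "'a::euclidean_space \<Rightarrow> real \<Rightarrow> 'a \<Rightarrow> real" where
  "gauss_density mu sig x = (\<Prod>i\<in>Basis. normal_density (mu \<bullet> i) sig (x \<bullet> i))"

text \<open>The (theta, sig)-Gaussian mixture model on R^d x {-1,1}: y uniform on {-1,1},
  then x ~ N(y theta, sig^2 I).\<close>
definition gmm :: "'a::euclidean_space \<Rightarrow> real \<Rightarrow> ('a \<times> real) measure" where
  "gmm theta sig = density (lborel \<Otimes>\<^sub>M count_space {-1, 1::real})
      (\<lambda>(x, y). ennreal (1/2 * gauss_density (y *\<^sub>R theta) sig x))"

end

(* Under the mixture the margin y (v . x) is distributed as N(v . theta, sig^2 |v|^2): the label y
   cancels against the sign of the component mean y theta. A Chernoff bound on its moment generating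
   function gives P(y (v . x) <= 0) <= exp (-(v . theta)^2 / (2 sig^2)) for a unit vector v, and on the
   complementary event the sign in the statement is that of v . theta. Finally, for unit vectors
   v . u = 1 - |v - u|^2 / 2, so with u = theta / sqrt d we get v . theta >= sqrt d (1 - tau^2 / 2) > 0. *)

theory Submission
  imports Defs
begin

lemma inner_ge_of_norm_diff_normalized_le:
  fixes u w :: "'a::real_inner"
  assumes "norm u = 1" and "r > 0" and "norm w = r" and "norm (u - w /\<^sub>R r) \<le> t"
  shows "u \<bullet> w \<ge> r * (1 - t\<^sup>2 / 2)"
proof -
  have "norm (w /\<^sub>R r) = 1"
    using assms(2,3) by simp
  then have "u \<bullet> (w /\<^sub>R r) = 1 - (norm (u - w /\<^sub>R r))\<^sup>2 / 2"
    using assms(1) by (simp add: dot_norm_neg)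
  moreover have "(norm (u - w /\<^sub>R r))\<^sup>2 \<le> t\<^sup>2"
    using assms(4) by (intro power_mono) auto
  ultimately have "u \<bullet> (w /\<^sub>R r) \<ge> 1 - t\<^sup>2 / 2"
    by simp
  then show ?thesis
    using assms(2) by (simp add: field_simps)
qed

lemma nn_integral_exp_mult_normal_density:
  assumes "sig > 0"
  shows "(\<integral>\<^sup>+x. ennreal (exp (c * x) * normal_density mu sig x) \<partial>lborel)
           = ennreal (exp (c * mu + c\<^sup>2 * sig\<^sup>2 / 2))"
proof -
  \<comment> \<open>Completing the square shifts the mean to \<open>mu + c sig\<^sup>2\<close>.\<close>
  have shift: "exp (c * x) * normal_density mu sig x
      = exp (c * mu + c\<^sup>2 * sig\<^sup>2 / 2) * normal_density (mu + c * sig\<^sup>2) sig x" for x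
  proof -
    have "c * x - (x - mu)\<^sup>2 / (2 * sig\<^sup>2)
        = (c * mu + c\<^sup>2 * sig\<^sup>2 / 2) - (x - (mu + c * sig\<^sup>2))\<^sup>2 / (2 * sig\<^sup>2)"
      using assms by (simp add: field_simps power2_eq_square)
    then show ?thesis
      unfolding normal_density_def by (simp add: mult_ac flip: exp_add)
  qed
  have "(\<integral>\<^sup>+x. ennreal (normal_density (mu + c * sig\<^sup>2) sig x) \<partial>lborel) = 1"
    using assms
    by (subst nn_integral_eq_integral) (auto simp: integrable_normal_density integral_normal_density)
  then show ?thesis
    by (simp add: shift ennreal_mult nn_integral_cmult)
qed

lemma gauss_density_nonneg: "gauss_density mu sig x \<ge> 0"
  by (simp add: gauss_density_def prod_nonneg)

lemma nn_integral_exp_inner_gauss_density: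
  fixes w mu :: "'a::euclidean_space"
  assumes "sig > 0"
  shows "(\<integral>\<^sup>+x. ennreal (exp (w \<bullet> x) * gauss_density mu sig x) \<partial>lborel)
           = ennreal (exp (w \<bullet> mu + sig\<^sup>2 * (norm w)\<^sup>2 / 2))"
proof -
  have factor: "exp (w \<bullet> x) * gauss_density mu sig x
      = (\<Prod>b\<in>Basis. exp ((w \<bullet> b) * (x \<bullet> b)) * normal_density (mu \<bullet> b) sig (x \<bullet> b))" for x
    unfolding gauss_density_def prod.distrib
    by (subst euclidean_inner) (simp add: exp_sum inner_commute)
  have "(\<integral>\<^sup>+x. ennreal (exp (w \<bullet> x) * gauss_density mu sig x) \<partial>lborel)
      = (\<integral>\<^sup>+x. (\<Prod>b\<in>Basis. ennreal (exp ((w \<bullet> b) * (x \<bullet> b))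
          * normal_density (mu \<bullet> b) sig (x \<bullet> b))) \<partial>lborel)"
    by (simp add: factor prod_ennreal)
  also have "\<dots> = (\<Prod>b\<in>Basis.
      \<integral>\<^sup>+x. ennreal (exp ((w \<bullet> b) * x) * normal_density (mu \<bullet> b) sig x) \<partial>lborel)"
    by (rule nn_integral_lborel_prod) auto
  also have "\<dots> = ennreal (exp (\<Sum>b\<in>Basis. (w \<bullet> b) * (mu \<bullet> b) + (w \<bullet> b)\<^sup>2 * sig\<^sup>2 / 2))"
    using assms by (simp add: nn_integral_exp_mult_normal_density prod_ennreal exp_sum)
  also have "(\<Sum>b\<in>Basis. (w \<bullet> b) * (mu \<bullet> b) + (w \<bullet> b)\<^sup>2 * sig\<^sup>2 / 2)
      = w \<bullet> mu + sig\<^sup>2 * (norm w)\<^sup>2 / 2"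
  proof -
    have "(norm w)\<^sup>2 = (\<Sum>b\<in>Basis. (w \<bullet> b)\<^sup>2)"
      unfolding power2_norm_eq_inner by (subst euclidean_inner) (simp add: power2_eq_square)
    then show ?thesis
      by (simp add: sum.distrib euclidean_inner[of w mu] sum_divide_distrib sum_distrib_left mult_ac)
  qed
  finally show ?thesis .
qed

lemma borel_measurable_gauss_density [measurable (raw)]:
  assumes [measurable]: "f \<in> borel_measurable M" "g \<in> borel_measurable M"
  shows "(\<lambda>z. gauss_density (f z) sig (g z)) \<in> borel_measurable M"
  unfolding gauss_density_def normal_density_def by measurable

lemma borel_measurable_snd_count_space [measurable]:
  "(snd :: _ \<Rightarrow> real) \<in> borel_measurable (M \<Otimes>\<^sub>M count_space A)"
  by (rule measurable_compose[OF measurable_snd]) (simp add: measurable_count_space_eq1)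

lemma sets_gmm [measurable_cong]:
  "sets (gmm theta sig) = sets (lborel \<Otimes>\<^sub>M count_space {-1, 1})"
  by (simp add: gmm_def)

lemma nn_integral_gmm:
  fixes theta :: "'a::euclidean_space"
  assumes [measurable]: "f \<in> borel_measurable (lborel \<Otimes>\<^sub>M count_space {-1, 1})"
  shows "(\<integral>\<^sup>+z. f z \<partial>gmm theta sig)
           = (\<Sum>y\<in>{-1, 1}. \<integral>\<^sup>+x. ennreal (1/2 * gauss_density (y *\<^sub>R theta) sig x) * f (x, y) \<partial>lborel)"
proof -
  interpret pair_sigma_finite lborel "count_space {-1, 1::real}"
    by (intro pair_sigma_finite.intro lborel.sigma_finite_measure_axioms
        sigma_finite_measure_count_space_finite) simp
  have "(\<integral>\<^sup>+z. f z \<partial>gmm theta sig) = (\<integral>\<^sup>+z.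
      ennreal (1/2 * gauss_density (snd z *\<^sub>R theta) sig (fst z)) * f z \<partial>(lborel \<Otimes>\<^sub>M count_space {-1, 1}))"
  proof -
    have "(\<lambda>(x, y). ennreal (1/2 * gauss_density (y *\<^sub>R theta) sig x))
        \<in> borel_measurable (lborel \<Otimes>\<^sub>M count_space {-1, 1})"
      by measurable
    then show ?thesis
      unfolding gmm_def by (simp only: nn_integral_density[OF _ assms] case_prod_beta)
  qed
  also have "\<dots> = (\<integral>\<^sup>+y. \<integral>\<^sup>+x.
      ennreal (1/2 * gauss_density (y *\<^sub>R theta) sig x) * f (x, y) \<partial>lborel \<partial>count_space {-1, 1})"
    by (subst nn_integral_snd[symmetric]) (auto simp: case_prod_beta)
  finally show ?thesis
    by (simp only: nn_integral_count_space_finite finite.emptyI finite_insert)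
qed

lemma nn_integral_gmm_exp_margin:
  fixes theta v :: "'a::euclidean_space"
  assumes "sig > 0"
  shows "(\<integral>\<^sup>+(x, y). ennreal (exp (c * (y * (v \<bullet> x)))) \<partial>gmm theta sig)
           = ennreal (exp (c * (v \<bullet> theta) + sig\<^sup>2 * c\<^sup>2 * (norm v)\<^sup>2 / 2))"
    (is "_ = ennreal (exp ?mgf)")
proof -
  have component: "(\<integral>\<^sup>+x. ennreal (1/2 * gauss_density (y *\<^sub>R theta) sig x)
        * ennreal (exp (c * (y * (v \<bullet> x)))) \<partial>lborel) = ennreal (1/2) * ennreal (exp ?mgf)"
    if "y \<in> {-1, 1}" for y
  proof -
    let ?G = "gauss_density (y *\<^sub>R theta) sig"
    have pointwise: "ennreal (1/2 * ?G x) * ennreal (exp (c * (y * (v \<bullet> x))))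
        = ennreal (1/2) * ennreal (exp (((c * y) *\<^sub>R v) \<bullet> x) * ?G x)" for x
    proof -
      have "ennreal (1/2 * ?G x) * ennreal (exp (c * (y * (v \<bullet> x))))
          = ennreal (1/2 * ?G x * exp (c * (y * (v \<bullet> x))))"
        by (intro ennreal_mult[symmetric]) (auto simp: gauss_density_nonneg)
      also have "\<dots> = ennreal (1/2) * ennreal (exp (((c * y) *\<^sub>R v) \<bullet> x) * ?G x)"
        by (subst ennreal_mult[symmetric]) (auto simp: gauss_density_nonneg mult_ac)
      finally show ?thesis .
    qed
    have "(\<integral>\<^sup>+x. ennreal (1/2 * ?G x) * ennreal (exp (c * (y * (v \<bullet> x)))) \<partial>lborel)
        = ennreal (1/2) * (\<integral>\<^sup>+x. ennreal (exp (((c * y) *\<^sub>R v) \<bullet> x) * ?G x) \<partial>lborel)"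
      unfolding pointwise by (rule nn_integral_cmult) measurable
    also have "\<dots> = ennreal (1/2) * ennreal (exp (((c * y) *\<^sub>R v) \<bullet> (y *\<^sub>R theta)
        + sig\<^sup>2 * (norm ((c * y) *\<^sub>R v))\<^sup>2 / 2))"
      using assms by (simp only: nn_integral_exp_inner_gauss_density)
    also have "((c * y) *\<^sub>R v) \<bullet> (y *\<^sub>R theta) + sig\<^sup>2 * (norm ((c * y) *\<^sub>R v))\<^sup>2 / 2 = ?mgf"
      using that by (auto simp: power_mult_distrib)
    finally show ?thesis .
  qed
  have "(2::ennreal) * inverse 2 = 1"
    by (simp flip: divide_ennreal_def)
  then have "(\<Sum>y\<in>{-1, 1::real}. ennreal (1/2) * X) = X" for X
    by (simp add: mult.assoc[symmetric])
  moreover have "(\<lambda>(x, y). ennreal (exp (c * (y * (v \<bullet> x)))))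
      \<in> borel_measurable (lborel \<Otimes>\<^sub>M count_space {-1, 1})"
    by measurable
  ultimately show ?thesis
    by (simp only: nn_integral_gmm prod.case sum.cong[OF refl component])
qed

lemma prob_space_gmm:
  assumes "sig > 0"
  shows "prob_space (gmm theta sig)"
proof
  have "emeasure (gmm theta sig) (space (gmm theta sig)) = (\<integral>\<^sup>+z. 1 \<partial>gmm theta sig)"
    by simp
  also have "\<dots> = (\<integral>\<^sup>+(x, y). ennreal (exp (0 * (y * (0 \<bullet> x)))) \<partial>gmm theta sig)"
    by (rule nn_integral_cong) auto
  finally show "emeasure (gmm theta sig) (space (gmm theta sig)) = 1"
    by (simp only: nn_integral_gmm_exp_margin[OF assms]) simp
qed

lemma measure_gmm_margin_nonpos_le:
  fixes theta v :: "'a::euclidean_space"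
  assumes "sig > 0" and "v \<noteq> 0" and "v \<bullet> theta > 0"
  shows "measure (gmm theta sig) {(x, y) \<in> space (gmm theta sig). y * (v \<bullet> x) \<le> 0}
           \<le> exp (- (v \<bullet> theta)\<^sup>2 / (2 * sig\<^sup>2 * (norm v)\<^sup>2))"
proof -
  interpret prob_space "gmm theta sig"
    by (rule prob_space_gmm[OF assms(1)])
  define s where "s = (v \<bullet> theta) / (sig\<^sup>2 * (norm v)\<^sup>2)"
  have "s > 0"
    using assms unfolding s_def by simp
  have "{(x, y) \<in> space (gmm theta sig). y * (v \<bullet> x) \<le> 0}
      = {z \<in> space (gmm theta sig). (\<lambda>(x, y). y * (v \<bullet> x)) z \<le> 0}"
    by auto
  also have "emeasure (gmm theta sig) \<dots> \<le> ennreal (exp (s * 0))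
      * (\<integral>\<^sup>+z. ennreal (exp (- s * (\<lambda>(x, y). y * (v \<bullet> x)) z)) * indicator (space (gmm theta sig)) z
           \<partial>gmm theta sig)"
    using \<open>s > 0\<close> by (intro Chernoff_ineq_nn_integral_le) measurable
  also have "\<dots> = (\<integral>\<^sup>+(x, y). ennreal (exp ((- s) * (y * (v \<bullet> x)))) \<partial>gmm theta sig)"
    by (auto intro!: nn_integral_cong)
  also have "\<dots> = ennreal (exp (- s * (v \<bullet> theta) + sig\<^sup>2 * s\<^sup>2 * (norm v)\<^sup>2 / 2))"
    using nn_integral_gmm_exp_margin[OF assms(1), where c = "- s"] by simp
  also have "- s * (v \<bullet> theta) + sig\<^sup>2 * s\<^sup>2 * (norm v)\<^sup>2 / 2
      = - (v \<bullet> theta)\<^sup>2 / (2 * sig\<^sup>2 * (norm v)\<^sup>2)"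
    using assms unfolding s_def by (simp add: field_simps power2_eq_square)
  finally show ?thesis
    by (simp add: emeasure_eq_measure)
qed

lemma measure_gmm_margin_pos_ge:
  fixes theta v :: "'a::euclidean_space"
  assumes "sig > 0" and "v \<noteq> 0" and "v \<bullet> theta > 0"
  shows "measure (gmm theta sig) {(x, y) \<in> space (gmm theta sig). y * (v \<bullet> x) > 0}
           \<ge> 1 - exp (- (v \<bullet> theta)\<^sup>2 / (2 * sig\<^sup>2 * (norm v)\<^sup>2))"
proof -
  interpret prob_space "gmm theta sig"
    by (rule prob_space_gmm[OF assms(1)])
  let ?fail = "{(x, y) \<in> space (gmm theta sig). y * (v \<bullet> x) \<le> 0}"
  have "?fail = {z \<in> space (gmm theta sig). snd z * (v \<bullet> fst z) \<le> 0}"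
    by auto
  then have "?fail \<in> events"
    by simp measurable
  moreover have "{(x, y) \<in> space (gmm theta sig). y * (v \<bullet> x) > 0} = space (gmm theta sig) - ?fail"
    by auto
  ultimately show ?thesis
    using prob_compl measure_gmm_margin_nonpos_le[OF assms] by simp
qed

theorem lemma2:
  fixes theta v :: "'a::euclidean_space" and sig tau :: real
  assumes "norm theta = sqrt (real DIM('a))"
    and "sig > 0"
    and "norm v = 1"
    and "norm (v - theta /\<^sub>R sqrt (real DIM('a))) \<le> tau"
    and "tau < sqrt 2"
  shows "measure (gmm theta sig)
           {(x, y) \<in> space (gmm theta sig). sgn (y * (v \<bullet> x)) * (v \<bullet> theta) > 0}
         \<ge> 1 - exp (- (real DIM('a) * (1 - tau\<^sup>2 / 2)\<^sup>2) / (2 * sig\<^sup>2))"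
proof -
  let ?d = "real DIM('a)" and ?m = "v \<bullet> theta"
  have "0 \<le> tau"
    using norm_ge_zero assms(4) by (rule order.trans)
  then have "0 < sqrt ?d * (1 - tau\<^sup>2 / 2)"
    using power_strict_mono[OF assms(5), of 2] by simp
  moreover have margin: "sqrt ?d * (1 - tau\<^sup>2 / 2) \<le> ?m"
    using assms(1,3,4) by (intro inner_ge_of_norm_diff_normalized_le) auto
  ultimately have "?m > 0" and "?d * (1 - tau\<^sup>2 / 2)\<^sup>2 \<le> ?m\<^sup>2"
    using power_mono[OF margin, of 2] by (auto simp: power_mult_distrib)
  have event: "{(x, y) \<in> space (gmm theta sig). sgn (y * (v \<bullet> x)) * ?m > 0}
      = {(x, y) \<in> space (gmm theta sig). y * (v \<bullet> x) > 0}"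
    using \<open>?m > 0\<close> by (auto simp: sgn_if)
  have "v \<noteq> 0"
    using assms(3) by auto
  then have "measure (gmm theta sig) {(x, y) \<in> space (gmm theta sig). y * (v \<bullet> x) > 0}
      \<ge> 1 - exp (- ?m\<^sup>2 / (2 * sig\<^sup>2))"
    using measure_gmm_margin_pos_ge[OF assms(2) _ \<open>?m > 0\<close>] assms(3) by simp
  moreover have "exp (- ?m\<^sup>2 / (2 * sig\<^sup>2)) \<le> exp (- (?d * (1 - tau\<^sup>2 / 2)\<^sup>2) / (2 * sig\<^sup>2))"
    using \<open>?d * (1 - tau\<^sup>2 / 2)\<^sup>2 \<le> ?m\<^sup>2\<close> assms(2) by (simp add: divide_right_mono)
  ultimately show ?thesis
    unfolding event by linarith
qed

end
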